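(* Let $0<\theta<1$ be irrational, $\lambda=e^{2\pi i\theta}$, and $0\le m<n$ integers. Then for any $\epsilon>0$ there is $s$ with $0<|s|<1$ such that for every $g\in Z^\lambda_{m,n}$ there exists $\tilde g\in Z^s_{m,n}$ with $\sup_{z\in\widehat{\mathbb C}}d_{S^2}(\tilde g(z),g(z))<\epsilon$, where $d_{S^2}$ is the spherical metric.
   Context: $Z^s_{m,n}$ is the set of quadratic rational maps $g$ with critical points $1$ and $c$ (i.e. $g'(1)=g'(c)=0$), $g^m(c)=g^n(c)$, $g(0)=0$, $g(\infty)=\infty$, and $g'(0)=s$. *)

theory Defs
  imports "HOL-Analysis.Analysis" "HOL-Computational_Algebra.Polynomial"
begin

text \<open>The Riemann sphere: None is the point at infinity.\<close>
type_synonym sphere = "complex option"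

definition rat_map :: "complex poly \<Rightarrow> complex poly \<Rightarrow> sphere \<Rightarrow> sphere" where
  "rat_map p q w = (case w of
      Some z \<Rightarrow> (if poly q z = 0 then None else Some (poly p z / poly q z))
    | None \<Rightarrow> (if degree p > degree q then None
               else Some (if degree p = degree q then lead_coeff p / lead_coeff q else 0)))"

definition quad_rat :: "(sphere \<Rightarrow> sphere) \<Rightarrow> bool" where
  "quad_rat g \<longleftrightarrow> (\<exists>p q. coprime p q \<and> max (degree p) (degree q) = 2 \<and> g = rat_map p q)"

definition chart_at :: "sphere \<Rightarrow> sphere \<Rightarrow> complex" where
  "chart_at a w = (case a of
      None \<Rightarrow> (case w of None \<Rightarrow> 0 | Some u \<Rightarrow> inverse u)
    | Some _ \<Rightarrow> (case w of None \<Rightarrow> 0 | Some u \<Rightarrow> u))"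

definition inv_chart_at :: "sphere \<Rightarrow> complex \<Rightarrow> sphere" where
  "inv_chart_at a x = (case a of
      None \<Rightarrow> (if x = 0 then None else Some (inverse x))
    | Some _ \<Rightarrow> Some x)"

text \<open>g has derivative D at the point z of the sphere, computed in the standard local
  coordinates at z and at g z.  Critical point: derivative 0.\<close>
definition sphere_deriv :: "(sphere \<Rightarrow> sphere) \<Rightarrow> sphere \<Rightarrow> complex \<Rightarrow> bool" where
  "sphere_deriv g z D \<longleftrightarrow>
     ((\<lambda>x. chart_at (g z) (g (inv_chart_at z x))) has_field_derivative D) (at (chart_at z z))"

text \<open>Spherical (chordal) metric on the Riemann sphere, viewed as the unit sphere.\<close>
definition sdist :: "sphere \<Rightarrow> sphere \<Rightarrow> real" where
  "sdist a b = (case (a, b) of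
      (None, None) \<Rightarrow> 0
    | (Some z, None) \<Rightarrow> 2 / sqrt (1 + (cmod z)\<^sup>2)
    | (None, Some w) \<Rightarrow> 2 / sqrt (1 + (cmod w)\<^sup>2)
    | (Some z, Some w) \<Rightarrow> 2 * cmod (z - w) / sqrt ((1 + (cmod z)\<^sup>2) * (1 + (cmod w)\<^sup>2)))"

definition Z :: "complex \<Rightarrow> nat \<Rightarrow> nat \<Rightarrow> (sphere \<Rightarrow> sphere) set" where
  "Z s m n = {g. quad_rat g
      \<and> sphere_deriv g (Some 1) 0
      \<and> (\<exists>c. c \<noteq> Some 1 \<and> sphere_deriv g c 0 \<and> (g ^^ m) c = (g ^^ n) c)
      \<and> g (Some 0) = Some 0 \<and> g None = None
      \<and> sphere_deriv g (Some 0) s}"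

end

theory Submission
  imports Defs "HOL-Computational_Algebra.Fundamental_Theorem_Algebra"
begin

text \<open>
  Normalise quadratic maps g with g(0) = 0, g(\<infinity>) = \<infinity>, g'(0) = s and critical point 1:
  for s \<noteq> 0 they are exactly the maps normal_map s g, z \<mapsto> (s z - s z^2/(g+2)) / (1 + g z),
  with an admissible parameter g (g \<noteq> -1, -2); the free critical point is -(g+2)/g.
  Lifting the map to C^2 by a homogeneous quadratic map hmap, the condition g^m(c) = g^n(c)
  becomes the vanishing of a polynomial orbit_rel m n s g (Z_normal_form, normal_map_in_Z).

  The theorem then follows from three facts.
  (1) Continuity: normal_map s g depends continuously on (s, g), uniformly in the chordal
      metric on the whole sphere (normal_map_close); this uses a quadratic lower bound for
      hmap, obtained by compactness of the unit sphere of C^2.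
  (2) Roots of a polynomial family with continuously varying values and bounded degree
      persist under perturbation of the parameter (roots_persist).
  (3) For s = e^{2\<pi>i\<theta>}, \<theta> irrational, the orbit relation is not identically zero in g
      (orbit_rel_not_identically_zero): near g = -1 the map degenerates to z \<mapsto> s z, and a
      rescaled critical orbit tends to 1, s, s^2, ..., whose points are pairwise distinct.
  Hence Z^\<lambda>_{m,n} is finite and each of its elements can be followed to all s near \<lambda>
  (Z_perturbation); choosing s near \<lambda> inside the unit disc proves the theorem.
\<close>

text \<open>Factor-by-factor comparison: if every root of p lies at distance at least e from z0
  and z1 lies within e/2 of z0, then each linear factor grows by at most 3/2 when z0 is
  replaced by z1.\<close>
lemma poly_bound_away_from_roots:
  fixes p :: "complex poly"
  assumes far: "\<And>z. poly p z = 0 \<Longrightarrow> e \<le> cmod (z - z0)" and near: "cmod (z1 - z0) \<le> e / 2"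
  shows "cmod (poly p z1) \<le> (3/2) ^ degree p * cmod (poly p z0)"
proof -
  obtain r where r: "smult (lead_coeff p) (\<Prod>i<degree p. [:- r i, 1:]) = p"
    using complex_poly_decompose' by blast
  have eval: "poly p x = lead_coeff p * (\<Prod>i<degree p. x - r i)" for x
    by (subst r[symmetric]) (simp add: poly_prod)
  have factor: "cmod (z1 - r i) \<le> 3/2 * cmod (z0 - r i)" if "i < degree p" for i
  proof -
    have "poly p (r i) = 0" unfolding eval using that by (auto intro!: prod_zero)
    hence "e \<le> cmod (z0 - r i)" using far by (metis norm_minus_commute)
    moreover have "cmod (z1 - r i) \<le> cmod (z1 - z0) + cmod (z0 - r i)"
      using norm_triangle_ineq[of "z1 - z0" "z0 - r i"] by simp
    ultimately show ?thesis using near by simp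
  qed
  have "cmod (poly p z1) = cmod (lead_coeff p) * (\<Prod>i<degree p. cmod (z1 - r i))"
    unfolding eval by (simp add: norm_mult prod_norm)
  also have "\<dots> \<le> cmod (lead_coeff p) * (\<Prod>i<degree p. 3/2 * cmod (z0 - r i))"
    using factor by (intro mult_left_mono prod_mono) auto
  also have "\<dots> = (3/2) ^ degree p * cmod (poly p z0)"
    unfolding eval prod.distrib by (simp add: norm_mult prod_norm)
  finally show ?thesis .
qed

lemma roots_persist:
  fixes F :: "'a::t2_space \<Rightarrow> complex poly"
  assumes cont: "\<And>x. isCont (\<lambda>s. poly (F s) x) s0"
    and deg: "\<And>s. degree (F s) \<le> D"
    and nonzero: "F s0 \<noteq> 0" and root: "poly (F s0) z0 = 0" and e: "e > 0"
  shows "eventually (\<lambda>s. \<exists>z. cmod (z - z0) < e \<and> poly (F s) z = 0) (nhds s0)"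
proof -
  have "countable {z. poly (F s0) z = 0}"
    using poly_roots_finite[OF nonzero] by (rule countable_finite)
  with e have "ball z0 (e / 2) - {z. poly (F s0) z = 0} \<noteq> {}"
    by (intro ball_minus_countable_nonempty) auto
  then obtain z1 where "z1 \<in> ball z0 (e / 2)" "poly (F s0) z1 \<noteq> 0" by blast
  hence z1: "cmod (z1 - z0) < e / 2" "poly (F s0) z1 \<noteq> 0"
    by (auto simp: dist_norm norm_minus_commute)
  define A where "A = cmod (poly (F s0) z1)"
  define K :: real where "K = (3/2) ^ D"
  have A: "A > 0" and K: "K > 0" using z1 unfolding A_def K_def by auto
  have tendsto: "((\<lambda>s. poly (F s) x) \<longlongrightarrow> poly (F s0) x) (nhds s0)" for x
    using cont[of x] tendsto_at_iff_tendsto_nhds[of "\<lambda>s. poly (F s) x" s0] by (simp add: isCont_def)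
  have "eventually (\<lambda>s. dist (poly (F s) z1) (poly (F s0) z1) < A / 2) (nhds s0)"
    using tendsto[of z1] A unfolding tendsto_iff by (meson half_gt_zero)
  moreover have "eventually (\<lambda>s. dist (poly (F s) z0) (poly (F s0) z0) < A / (2 * K)) (nhds s0)"
    using tendsto[of z0] A K unfolding tendsto_iff by simp
  ultimately show ?thesis
  proof eventually_elim
    case (elim s)
    show ?case
    proof (rule ccontr)
      assume no_root: "\<not> ?case"
      have "cmod (poly (F s) z1) \<le> (3/2) ^ degree (F s) * cmod (poly (F s) z0)"
        using no_root z1(1) by (intro poly_bound_away_from_roots) (auto simp: not_less)
      also have "\<dots> \<le> K * cmod (poly (F s) z0)"
        unfolding K_def by (intro mult_right_mono power_increasing deg) auto
      also have "\<dots> < A / 2" using elim(2) root K by (simp add: dist_norm field_simps)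
      finally have "cmod (poly (F s) z1) < A / 2" .
      moreover have "A - cmod (poly (F s) z1) < A / 2"
        using elim(1) norm_triangle_ineq2[of "poly (F s0) z1" "poly (F s) z1"]
        unfolding A_def by (simp add: dist_norm norm_minus_commute)
      ultimately show False by simp
    qed
  qed
qed

text \<open>Homogeneous coordinates.  A point (X, Y) of C^2 - {0} represents X/Y on the sphere;
  det2 u w = 0 says that u and w represent the same point.\<close>
definition to_sphere :: "complex \<times> complex \<Rightarrow> sphere" where
  "to_sphere v = (if snd v = 0 then None else Some (fst v / snd v))"

definition hom_coords :: "sphere \<Rightarrow> complex \<times> complex" where
  "hom_coords z = (case z of None \<Rightarrow> (1, 0) | Some x \<Rightarrow> (x, 1))"

definition det2 :: "'a::comm_ring_1 \<times> 'a \<Rightarrow> 'a \<times> 'a \<Rightarrow> 'a" where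
  "det2 u w = fst u * snd w - fst w * snd u"

definition cscale :: "'a::comm_ring_1 \<Rightarrow> 'a \<times> 'a \<Rightarrow> 'a \<times> 'a" where
  "cscale c v = (c * fst v, c * snd v)"

lemma to_sphere_hom_coords: "to_sphere (hom_coords z) = z"
  unfolding hom_coords_def to_sphere_def by (cases z) auto

lemma hom_coords_nonzero: "hom_coords z \<noteq> 0"
  unfolding hom_coords_def by (cases z) (auto simp: zero_prod_def)

lemma to_sphere_cscale: "c \<noteq> 0 \<Longrightarrow> to_sphere (cscale c v) = to_sphere v"
  unfolding to_sphere_def cscale_def by auto

lemma to_sphere_eq_iff:
  assumes "u \<noteq> 0" "w \<noteq> 0"
  shows "to_sphere u = to_sphere w \<longleftrightarrow> det2 u w = 0"
  using assms unfolding to_sphere_def det2_def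
  by (cases u; cases w) (auto simp: zero_prod_def field_simps)

lemma det2_cscale: "det2 (cscale a u) (cscale b w) = a * b * det2 u w"
  unfolding det2_def cscale_def by (simp add: algebra_simps)

definition qmap :: "complex \<Rightarrow> complex \<Rightarrow> complex \<Rightarrow> sphere \<Rightarrow> sphere" where
  "qmap b a g = rat_map [:0, b, a:] [:1, g:]"

lemma qmap_Some: "qmap b a g (Some z) = to_sphere (b * z + a * z^2, 1 + g * z)"
  unfolding qmap_def rat_map_def to_sphere_def by (simp add: algebra_simps power2_eq_square)

lemma qmap_None: "a \<noteq> 0 \<Longrightarrow> qmap b a g None = None"
  unfolding qmap_def rat_map_def by auto

text \<open>When b = -a (g + 2) with a \<noteq> 0 and g \<noteq> -1, numerator and denominator of the map
  have no common zero, so the map really has degree two.\<close>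
lemma pole_not_zero:
  fixes a g z :: complex
  assumes a: "a \<noteq> 0" and g: "g + 1 \<noteq> 0" and pole: "1 + g * z = 0"
  shows "- a * (g + 2) * z + a * z^2 \<noteq> 0"
proof
  assume "- a * (g + 2) * z + a * z^2 = 0"
  hence "a * z * (z - (g + 2)) = 0" by (simp add: algebra_simps power2_eq_square)
  moreover have "z \<noteq> 0" using pole by auto
  ultimately have "z = g + 2" using a by simp
  with pole have "(g + 1)^2 = 0" by (simp add: algebra_simps power2_eq_square)
  with g show False by simp
qed

text \<open>The normal form of Z^s: the map with fixed points 0, infinity, multiplier s at 0,
  critical point 1 and free parameter g.  Its second critical point is -(g + 2)/g.\<close>
definition normal_map :: "complex \<Rightarrow> complex \<Rightarrow> sphere \<Rightarrow> sphere" where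
  "normal_map s g = qmap s (- s / (g + 2)) g"

definition admissible :: "complex \<Rightarrow> complex \<Rightarrow> bool" where
  "admissible s g \<longleftrightarrow> s \<noteq> 0 \<and> g \<noteq> -2 \<and> g \<noteq> -1"

lemma admissibleD:
  assumes "admissible s g"
  shows "g + 1 \<noteq> 0" "g + 2 \<noteq> 0" "- s / (g + 2) \<noteq> 0" "s = - (- s / (g + 2)) * (g + 2)"
  using assms unfolding admissible_def by (auto simp: add_eq_0_iff2)

definition hmap :: "'a::comm_ring_1 \<Rightarrow> 'a \<Rightarrow> 'a \<times> 'a \<Rightarrow> 'a \<times> 'a" where
  "hmap s g v = (s * fst v * ((g + 2) * snd v - fst v), (g + 2) * snd v * (snd v + g * fst v))"

definition hcrit :: "'a::comm_ring_1 \<Rightarrow> 'a \<times> 'a" where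
  "hcrit g = (- (g + 2), g)"

lemma hmap_cscale: "hmap s g (cscale c v) = cscale (c^2) (hmap s g v)"
  unfolding hmap_def cscale_def by (simp add: algebra_simps power2_eq_square)

lemma hmap_lifts_normal_map:
  assumes adm: "admissible s g" and v: "v \<noteq> 0"
  shows "normal_map s g (to_sphere v) = to_sphere (hmap s g v) \<and> hmap s g v \<noteq> 0"
proof -
  define a where "a = - s / (g + 2)"
  note coeffs = admissibleD[OF adm, folded a_def]
  obtain X Y where XY: "v = (X, Y)" by fastforce
  show ?thesis
  proof (cases "Y = 0")
    case True
    with v XY have "X \<noteq> 0" by (auto simp: zero_prod_def)
    moreover have "normal_map s g None = None"
      unfolding normal_map_def a_def[symmetric] using coeffs(3) by (rule qmap_None)
    ultimately show ?thesis using True XY adm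
      unfolding admissible_def by (auto simp: to_sphere_def hmap_def zero_prod_def)
  next
    case False
    define z where "z = X / Y"
    have X: "X = z * Y" using False unfolding z_def by simp
    have v_sphere: "to_sphere v = Some z" using False unfolding to_sphere_def XY z_def by simp
    have lift: "hmap s g v = cscale (Y^2 * (g + 2)) (s * z + a * z^2, 1 + g * z)"
      unfolding XY X hmap_def cscale_def a_def using coeffs(2)
      by (simp add: field_simps power2_eq_square)
    have scale: "Y^2 * (g + 2) \<noteq> 0" using False coeffs(2) by simp
    have "(s * z + a * z^2, 1 + g * z) \<noteq> 0"
      using pole_not_zero[OF coeffs(3,1)] coeffs(4) by (auto simp: zero_prod_def)
    hence "hmap s g v \<noteq> 0" using scale unfolding lift by (auto simp: cscale_def zero_prod_def)
    moreover have "normal_map s g (to_sphere v) = to_sphere (hmap s g v)"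
      unfolding lift to_sphere_cscale[OF scale] v_sphere normal_map_def a_def[symmetric]
      by (rule qmap_Some)
    ultimately show ?thesis by simp
  qed
qed

definition horbit :: "'a::comm_ring_1 \<Rightarrow> 'a \<Rightarrow> nat \<Rightarrow> 'a \<times> 'a" where
  "horbit s g k = (hmap s g ^^ k) (hcrit g)"

definition orbit_rel :: "nat \<Rightarrow> nat \<Rightarrow> 'a::comm_ring_1 \<Rightarrow> 'a \<Rightarrow> 'a" where
  "orbit_rel m n s g = det2 (horbit s g m) (horbit s g n)"

lemma horbit_Suc: "horbit s g (Suc k) = hmap s g (horbit s g k)"
  unfolding horbit_def by simp

lemma critical_orbit_iff:
  assumes adm: "admissible s g"
  shows "(normal_map s g ^^ m) (to_sphere (hcrit g)) = (normal_map s g ^^ n) (to_sphere (hcrit g))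
    \<longleftrightarrow> orbit_rel m n s g = 0"
proof -
  have iterate: "(normal_map s g ^^ k) (to_sphere (hcrit g)) = to_sphere (horbit s g k)
      \<and> horbit s g k \<noteq> 0" for k
  proof (induction k)
    case 0
    have "hcrit g \<noteq> 0" using admissibleD(2)[OF adm] by (auto simp: hcrit_def zero_prod_def)
    then show ?case by (simp add: horbit_def)
  next
    case (Suc k)
    then show ?case using hmap_lifts_normal_map[OF adm] by (simp add: horbit_Suc)
  qed
  show ?thesis
    using iterate[of m] iterate[of n] to_sphere_eq_iff unfolding orbit_rel_def by simp
qed

lemma qmap_deriv_finite:
  assumes "1 + g * w \<noteq> 0"
  shows "sphere_deriv (qmap b a g) (Some w) D \<longleftrightarrow> D = (b + 2*a*w + a*g*w^2) / (1 + g*w)^2"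
proof -
  have chart: "(\<lambda>x. chart_at (qmap b a g (Some w)) (qmap b a g (inv_chart_at (Some w) x)))
      = (\<lambda>x. (b*x + a*x^2) / (1 + g*x))"
    using assms by (auto simp: qmap_Some to_sphere_def chart_at_def inv_chart_at_def fun_eq_iff)
  have "((\<lambda>x. (b*x + a*x^2) / (1 + g*x)) has_field_derivative
      (b + 2*a*w + a*g*w^2) / (1 + g*w)^2) (at w)"
    using assms by (auto intro!: derivative_eq_intros simp: field_simps power2_eq_square)
  then show ?thesis
    unfolding sphere_deriv_def chart using DERIV_unique by (auto simp: chart_at_def)
qed

lemma qmap_deriv_pole:
  assumes pole: "1 + g * w = 0" and "b * w + a * w^2 \<noteq> 0"
  shows "sphere_deriv (qmap b a g) (Some w) D \<longleftrightarrow> D = g / (b*w + a*w^2)"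
proof -
  have chart: "(\<lambda>x. chart_at (qmap b a g (Some w)) (qmap b a g (inv_chart_at (Some w) x)))
      = (\<lambda>x. (1 + g*x) / (b*x + a*x^2))"
    using pole by (auto simp: qmap_Some to_sphere_def chart_at_def inv_chart_at_def fun_eq_iff)
  have "((\<lambda>x. (1 + g*x) / (b*x + a*x^2)) has_field_derivative
      (g * (b*w + a*w^2) - (1 + g*w) * (b + a*(2*w))) / ((b*w + a*w^2) * (b*w + a*w^2))) (at w)"
    by (rule DERIV_divide) (use assms in \<open>auto intro!: derivative_eq_intros simp: power2_eq_square\<close>)
  moreover have "(g * (b*w + a*w^2) - (1 + g*w) * (b + a*(2*w))) / ((b*w + a*w^2) * (b*w + a*w^2))
      = g / (b*w + a*w^2)"
    using assms by simp
  ultimately show ?thesis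
    unfolding sphere_deriv_def chart using DERIV_unique by (auto simp: chart_at_def)
qed

lemma qmap_deriv_infinity:
  assumes "a \<noteq> 0"
  shows "sphere_deriv (qmap b a g) None D \<longleftrightarrow> D = g / a"
proof -
  have "chart_at (qmap b a g None) (qmap b a g (inv_chart_at None x)) = x * (x + g) / (a + b*x)"
    for x
  proof (cases "x = 0")
    case False
    have "(1 + g * inverse x) / (b * inverse x + a * (inverse x)^2)
        = ((1 + g * inverse x) * x^2) / ((b * inverse x + a * (inverse x)^2) * x^2)"
      using False by simp
    also have "\<dots> = x * (x + g) / (a + b*x)"
      using False by (simp add: algebra_simps power2_eq_square)
    finally show ?thesis using False assms
      by (auto simp: qmap_None qmap_Some to_sphere_def chart_at_def inv_chart_at_def)
  qed (use assms in \<open>simp add: qmap_None chart_at_def inv_chart_at_def\<close>)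
  moreover have "((\<lambda>x. x * (x + g) / (a + b*x)) has_field_derivative g / a) (at 0)"
    using assms by (auto intro!: derivative_eq_intros simp: field_simps power2_eq_square)
  ultimately show ?thesis
    unfolding sphere_deriv_def using DERIV_unique by (auto simp: chart_at_def)
qed

lemma qmap_critical_points:
  fixes a g :: complex
  assumes a: "a \<noteq> 0" and g1: "g + 1 \<noteq> 0"
  shows "sphere_deriv (qmap (- a * (g + 2)) a g) c 0 \<longleftrightarrow> c = Some 1 \<or> c = to_sphere (hcrit g)"
proof (cases c)
  case None
  then show ?thesis using qmap_deriv_infinity[OF a] a by (auto simp: to_sphere_def hcrit_def)
next
  case (Some w)
  have crit_Some: "to_sphere (hcrit g) = Some w \<longleftrightarrow> g \<noteq> 0 \<and> g * w + g + 2 = 0"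
  proof -
    have "- (g + 2) / g = w \<longleftrightarrow> g * w + g + 2 = 0" if "g \<noteq> 0"
    proof -
      have "- (g + 2) / g = w \<longleftrightarrow> - (g + 2) = w * g" using that by (simp add: divide_eq_eq)
      also have "\<dots> \<longleftrightarrow> g * w + g + 2 = 0"
        by (auto simp: algebra_simps) (metis add.commute add.left_commute neg_eq_iff_add_eq_0)+
      finally show ?thesis .
    qed
    then show ?thesis by (auto simp: to_sphere_def hcrit_def)
  qed
  show ?thesis
  proof (cases "1 + g * w = 0")
    case True
    have "g \<noteq> 0" "w \<noteq> 1" using True g1 by (auto simp: add.commute)
    moreover have "g * w + g + 2 \<noteq> 0"
    proof -
      have "g * w + g + 2 = (1 + g * w) + (g + 1)" by simp
      with True g1 show ?thesis by (simp only:) simp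
    qed
    ultimately show ?thesis
      using Some crit_Some qmap_deriv_pole[OF True pole_not_zero[OF a g1 True]]
        pole_not_zero[OF a g1 True] by simp
  next
    case False
    have "- a * (g + 2) + 2 * a * w + a * g * w^2 = a * ((w - 1) * (g * w + g + 2))"
      by (simp add: algebra_simps power2_eq_square)
    hence "sphere_deriv (qmap (- a * (g + 2)) a g) c 0 \<longleftrightarrow> w = 1 \<or> g * w + g + 2 = 0"
      using Some False a qmap_deriv_finite[OF False] by simp
    moreover have "g * w + g + 2 = 0 \<Longrightarrow> g \<noteq> 0" by auto
    ultimately show ?thesis using Some crit_Some by auto
  qed
qed

lemma qmap_critical_at_one:
  assumes no_common: "\<And>x. 1 + g * x = 0 \<Longrightarrow> b * x + a * x^2 \<noteq> 0"
    and crit: "sphere_deriv (qmap b a g) (Some 1) 0"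
  shows "g + 1 \<noteq> 0 \<and> b = - a * (g + 2)"
proof -
  have g1: "g + 1 \<noteq> 0"
  proof
    assume "g + 1 = 0"
    hence pole: "1 + g * 1 = 0" by (simp add: add.commute)
    with crit have "g = 0"
      using qmap_deriv_pole[OF pole no_common[OF pole]] no_common[OF pole] by simp
    with pole show False by simp
  qed
  hence "1 + g * 1 \<noteq> 0" by (simp add: add.commute)
  with crit have "b + 2 * a + a * g = 0" using qmap_deriv_finite[of g 1 b a 0] by simp
  with g1 show ?thesis by (simp add: algebra_simps add_eq_0_iff2)
qed

lemma coprime_iff_no_common_root:
  fixes p q :: "complex poly"
  shows "coprime p q \<longleftrightarrow> (\<forall>x. poly p x = 0 \<longrightarrow> poly q x \<noteq> 0)"
proof
  assume cop: "coprime p q"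
  show "\<forall>x. poly p x = 0 \<longrightarrow> poly q x \<noteq> 0"
  proof (intro allI impI notI)
    fix x assume "poly p x = 0" "poly q x = 0"
    hence "[:-x, 1:] dvd p" "[:-x, 1:] dvd q" by (simp_all add: poly_eq_0_iff_dvd)
    hence "is_unit [:-x, 1:]" using cop by (meson coprime_common_divisor)
    thus False by (simp add: is_unit_iff_degree)
  qed
next
  assume no_common: "\<forall>x. poly p x = 0 \<longrightarrow> poly q x \<noteq> 0"
  show "coprime p q"
  proof (rule coprimeI)
    fix c assume cp: "c dvd p" and cq: "c dvd q"
    show "is_unit c"
    proof (rule ccontr)
      assume "\<not> is_unit c"
      moreover have "c \<noteq> 0" using cp cq no_common by auto
      ultimately have "\<not> constant (poly c)" by (simp add: constant_degree is_unit_iff_degree)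
      then obtain z where "poly c z = 0" using fundamental_theorem_of_algebra by blast
      with cp cq no_common show False by (auto simp: dvd_def)
    qed
  qed
qed

lemma poly_as_sum:
  fixes p :: "complex poly"
  assumes "degree p \<le> D"
  shows "poly p x = (\<Sum>i\<le>D. coeff p i * x ^ i)"
  unfolding poly_altdef by (rule sum.mono_neutral_left) (use assms in \<open>auto simp: coeff_eq_0\<close>)

lemma quad_rat_fixing_0_infinity:
  assumes quad: "quad_rat f" and f0: "f (Some 0) = Some 0" and f_inf: "f None = None"
  shows "\<exists>b a g. a \<noteq> 0 \<and> f = qmap b a g \<and> (\<forall>x. 1 + g * x = 0 \<longrightarrow> b * x + a * x^2 \<noteq> 0)"
proof -
  obtain p q where cop: "coprime p q" and deg: "max (degree p) (degree q) = 2"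
    and f: "f = rat_map p q"
    using quad unfolding quad_rat_def by blast
  have "degree p > degree q" using f_inf unfolding f rat_map_def by (auto split: if_splits)
  hence deg_p: "degree p = 2" and deg_q: "degree q \<le> 1" using deg by auto
  have "poly q 0 \<noteq> 0" "poly p 0 = 0"
    using f0 unfolding f rat_map_def by (auto split: if_splits)
  hence c: "coeff q 0 \<noteq> 0" and p0: "coeff p 0 = 0" by (simp_all add: poly_0_coeff_0)
  define b a g where "b = coeff p 1 / coeff q 0" and "a = coeff p 2 / coeff q 0"
    and "g = coeff q 1 / coeff q 0"
  have "coeff p 2 \<noteq> 0" using deg_p leading_coeff_neq_0[of p] by fastforce
  hence a: "a \<noteq> 0" unfolding a_def using c by simp
  have poly_p: "poly p x = coeff q 0 * (b * x + a * x^2)" for x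
  proof -
    have "poly p x = coeff p 1 * x + coeff p 2 * x^2"
      using poly_as_sum[of p 2 x] deg_p p0 by (simp add: numeral_2_eq_2 power2_eq_square)
    then show ?thesis using c by (simp add: b_def a_def field_simps)
  qed
  have poly_q: "poly q x = coeff q 0 * (1 + g * x)" for x
    using poly_as_sum[OF deg_q, of x] c by (simp add: g_def field_simps)
  have "f = qmap b a g"
  proof
    fix w show "f w = qmap b a g w"
      using f_inf qmap_None[OF a] c
      by (cases w) (auto simp: f rat_map_def qmap_Some to_sphere_def poly_p poly_q)
  qed
  moreover have "b * x + a * x^2 \<noteq> 0" if "1 + g * x = 0" for x
    using cop that c unfolding coprime_iff_no_common_root by (auto simp: poly_p poly_q)
  ultimately show ?thesis using a by blast
qed

lemma normal_map_in_Z: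
  assumes adm: "admissible s g" and rel: "orbit_rel m n s g = 0"
  shows "normal_map s g \<in> Z s m n"
proof -
  define a where "a = - s / (g + 2)"
  note coeffs = admissibleD[OF adm, folded a_def]
  have f: "normal_map s g = qmap (- a * (g + 2)) a g"
    unfolding normal_map_def a_def[symmetric] using coeffs(4) by simp
  have "coprime [:0, - a * (g + 2), a:] [:1, g:]"
    unfolding coprime_iff_no_common_root
    using pole_not_zero[OF coeffs(3,1)] by (auto simp: algebra_simps power2_eq_square)
  moreover have "max (degree [:0, - a * (g + 2), a:]) (degree [:1, g:]) = 2"
    using coeffs(3) by auto
  ultimately have "quad_rat (normal_map s g)" unfolding quad_rat_def f qmap_def by blast
  moreover have "to_sphere (hcrit g) \<noteq> Some 1"
  proof
    assume "to_sphere (hcrit g) = Some 1"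
    hence "2 * (g + 1) = 0" by (auto simp: to_sphere_def hcrit_def field_simps split: if_splits)
    with coeffs(1) show False by (simp only: mult_eq_0_iff) simp
  qed
  moreover have "sphere_deriv (normal_map s g) c 0 \<longleftrightarrow> c = Some 1 \<or> c = to_sphere (hcrit g)"
    for c unfolding f by (rule qmap_critical_points[OF coeffs(3,1)])
  moreover have "normal_map s g (Some 0) = Some 0"
    unfolding f by (simp add: qmap_Some to_sphere_def)
  moreover have "normal_map s g None = None" unfolding f using coeffs(3) by (rule qmap_None)
  moreover have "sphere_deriv (normal_map s g) (Some 0) s"
    unfolding f using qmap_deriv_finite[of g 0] coeffs(4) by simp
  moreover have "(normal_map s g ^^ m) (to_sphere (hcrit g)) = (normal_map s g ^^ n) (to_sphere (hcrit g))"
    using critical_orbit_iff[OF adm] rel by simp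
  ultimately show ?thesis unfolding Z_def by blast
qed

lemma Z_normal_form:
  assumes s: "s \<noteq> 0" and f: "f \<in> Z s m n"
  shows "\<exists>g. admissible s g \<and> f = normal_map s g \<and> orbit_rel m n s g = 0"
proof -
  obtain c where c: "c \<noteq> Some 1" "sphere_deriv f c 0" "(f ^^ m) c = (f ^^ n) c"
    using f unfolding Z_def by blast
  obtain b a g where a: "a \<noteq> 0" and fq: "f = qmap b a g"
    and no_common: "\<And>x. 1 + g * x = 0 \<Longrightarrow> b * x + a * x^2 \<noteq> 0"
    using quad_rat_fixing_0_infinity f unfolding Z_def by blast
  have "sphere_deriv (qmap b a g) (Some 0) s" using f unfolding Z_def fq by blast
  hence bs: "b = s" using qmap_deriv_finite[of g 0 b a s] by simp
  have "sphere_deriv (qmap b a g) (Some 1) 0" using f unfolding Z_def fq by blast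
  with no_common have g1: "g + 1 \<noteq> 0" and b: "b = - a * (g + 2)"
    using qmap_critical_at_one by blast+
  have g2: "g + 2 \<noteq> 0" using b bs s by auto
  have adm: "admissible s g" using s g1 g2 unfolding admissible_def by (auto simp: add_eq_0_iff2)
  have "f = normal_map s g" unfolding fq normal_map_def bs[symmetric] b using g2 by simp
  moreover have "c = to_sphere (hcrit g)"
    using c(1,2) qmap_critical_points[OF a g1] unfolding fq b by blast
  ultimately show ?thesis using adm c(3) critical_orbit_iff[OF adm] by auto
qed

lemma norm_cscale: "norm (cscale c v) = cmod c * norm (v :: complex \<times> complex)"
proof -
  have "norm (cscale c v) = sqrt ((cmod c)^2 * ((cmod (fst v))^2 + (cmod (snd v))^2))"
    unfolding cscale_def norm_Pair by (simp add: norm_mult power_mult_distrib algebra_simps)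
  also have "\<dots> = cmod c * norm v" by (simp add: real_sqrt_mult norm_Pair[of "fst v" "snd v", symmetric])
  finally show ?thesis .
qed

lemma sqrt_one_plus_norm_quotient:
  "x \<noteq> 0 \<Longrightarrow> sqrt (1 + (cmod (y / x))^2) = norm (y, x) / cmod x"
proof -
  assume x: "x \<noteq> 0"
  have "1 + (cmod (y / x))^2 = ((cmod y)^2 + (cmod x)^2) / (cmod x)^2"
    using x by (simp add: norm_divide field_simps)
  then show ?thesis by (simp add: real_sqrt_divide norm_Pair)
qed

lemma sdist_to_sphere:
  assumes A: "A \<noteq> 0" and B: "B \<noteq> 0"
  shows "sdist (to_sphere A) (to_sphere B) = 2 * cmod (det2 A B) / (norm A * norm B)"
proof -
  obtain a1 a2 b1 b2 where AB: "A = (a1, a2)" "B = (b1, b2)" by fastforce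
  show ?thesis
  proof (cases "a2 = 0"; cases "b2 = 0")
    assume "a2 = 0" "b2 = 0"
    then show ?thesis unfolding AB to_sphere_def sdist_def det2_def by simp
  next
    assume a2: "a2 = 0" and b2: "b2 \<noteq> 0"
    hence "a1 \<noteq> 0" using A AB by (auto simp: zero_prod_def)
    with a2 b2 show ?thesis
      unfolding AB to_sphere_def sdist_def det2_def
      by (simp add: sqrt_one_plus_norm_quotient norm_mult norm_Pair)
  next
    assume a2: "a2 \<noteq> 0" and b2: "b2 = 0"
    hence "b1 \<noteq> 0" using B AB by (auto simp: zero_prod_def)
    with a2 b2 show ?thesis
      unfolding AB to_sphere_def sdist_def det2_def
      by (simp add: sqrt_one_plus_norm_quotient norm_mult norm_Pair)
  next
    assume a2: "a2 \<noteq> 0" and b2: "b2 \<noteq> 0"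
    have "sdist (to_sphere A) (to_sphere B) = 2 * cmod (a1 / a2 - b1 / b2)
        / (sqrt (1 + (cmod (a1 / a2))^2) * sqrt (1 + (cmod (b1 / b2))^2))"
      using a2 b2 unfolding AB to_sphere_def sdist_def by (simp add: real_sqrt_mult del: norm_divide)
    also have "a1 / a2 - b1 / b2 = (a1 * b2 - b1 * a2) / (a2 * b2)"
      using a2 b2 by (simp add: field_simps)
    finally show ?thesis using a2 b2
      unfolding sqrt_one_plus_norm_quotient[OF a2] sqrt_one_plus_norm_quotient[OF b2]
      unfolding AB det2_def by (simp add: norm_mult norm_divide)
  qed
qed

text \<open>Cauchy-Schwarz for the determinant.\<close>
lemma det2_bound: "cmod (det2 u w) \<le> norm u * norm (w :: complex \<times> complex)"
proof -
  define a b c d where "a = cmod (fst u)" and "b = cmod (snd u)" and "c = cmod (fst w)"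
    and "d = cmod (snd w)"
  have "cmod (det2 u w) \<le> a * d + c * b"
    unfolding det2_def a_def b_def c_def d_def by (metis norm_mult norm_triangle_ineq4)
  also have "\<dots> \<le> sqrt ((a^2 + b^2) * (c^2 + d^2))"
  proof (rule real_le_rsqrt)
    have "0 \<le> (a * c - b * d)^2" by simp
    then show "(a * d + c * b)^2 \<le> (a^2 + b^2) * (c^2 + d^2)"
      by (simp add: power2_eq_square algebra_simps)
  qed
  also have "\<dots> = norm u * norm w"
    unfolding a_def b_def c_def d_def by (simp add: real_sqrt_mult norm_Pair[symmetric])
  finally show ?thesis .
qed

lemma sdist_to_sphere_le:
  assumes A: "A \<noteq> 0" and B: "B \<noteq> 0"
  shows "sdist (to_sphere A) (to_sphere B) \<le> 2 * norm (B - A) / norm B"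
proof -
  have "det2 A B = det2 A (B - A)" unfolding det2_def by (simp add: algebra_simps)
  hence "cmod (det2 A B) \<le> norm A * norm (B - A)" using det2_bound by metis
  hence "2 * cmod (det2 A B) / (norm A * norm B) \<le> 2 * (norm A * norm (B - A)) / (norm A * norm B)"
    using A B by (intro divide_right_mono) auto
  then show ?thesis using A B by (simp add: sdist_to_sphere)
qed

text \<open>The homogeneous lift of an admissible map has no nontrivial zero; by compactness of
  the unit sphere and homogeneity of degree 2 it grows at least quadratically.\<close>
lemma hmap_lower_bound:
  assumes adm: "admissible s g"
  shows "\<exists>\<mu>>0. \<forall>v. \<mu> * (norm v)^2 \<le> norm (hmap s g v)"
proof -
  have "continuous_on (sphere 0 1) (\<lambda>v. norm (hmap s g v))"
    unfolding hmap_def by (intro continuous_intros)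
  then obtain u where u: "u \<in> sphere 0 1" and min: "\<And>w. w \<in> sphere 0 1 \<Longrightarrow> norm (hmap s g u) \<le> norm (hmap s g w)"
    using continuous_attains_inf[OF compact_sphere, of 0 1] by fastforce
  have "u \<noteq> 0" using u by auto
  hence \<mu>: "norm (hmap s g u) > 0" using hmap_lifts_normal_map[OF adm] by simp
  have "norm (hmap s g u) * (norm v)^2 \<le> norm (hmap s g v)" for v
  proof (cases "v = 0")
    case False
    define r where "r = norm v"
    have r: "r > 0" using False unfolding r_def by simp
    define w where "w = cscale (1 / of_real r) v"
    have "w \<in> sphere 0 1" unfolding w_def r_def using False by (simp add: norm_cscale norm_divide)
    moreover have "v = cscale (of_real r) w" using r unfolding w_def cscale_def by simp
    hence "norm (hmap s g v) = r^2 * norm (hmap s g w)"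
      using r by (simp add: hmap_cscale norm_cscale norm_power)
    ultimately show ?thesis
      using min[of w] r unfolding r_def by (simp add: mult.commute mult_left_mono)
  qed (simp add: hmap_def)
  with \<mu> show ?thesis by blast
qed

text \<open>The coefficients of hmap, written as (s(g+2) XY - s X^2, (g+2)g XY + (g+2) Y^2), depend
  continuously on (s, g); this bounds the change of hmap under a change of parameters.\<close>
definition hmap_coeff_dist :: "complex \<Rightarrow> complex \<Rightarrow> complex \<Rightarrow> complex \<Rightarrow> real" where
  "hmap_coeff_dist s g s' g' = cmod (s * (g + 2) - s' * (g' + 2)) + cmod (s - s')
     + cmod ((g + 2) * g - (g' + 2) * g') + cmod (g - g')"

lemma hmap_perturbation:
  "norm (hmap s g v - hmap s' g' v) \<le> hmap_coeff_dist s g s' g' * (norm v)^2"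
proof -
  obtain X Y where v: "v = (X, Y)" by fastforce
  define N where "N = (norm v)^2"
  have N: "N = (cmod X)^2 + (cmod Y)^2" unfolding N_def v by (simp add: norm_Pair)
  have "0 \<le> (cmod X - cmod Y)^2" by simp
  hence "2 * (cmod X * cmod Y) \<le> N" unfolding N by (simp add: power2_eq_square algebra_simps)
  moreover have "0 \<le> cmod X * cmod Y" by simp
  ultimately have XY: "cmod (X * Y) \<le> N" unfolding norm_mult by linarith
  have XX: "cmod (X * X) \<le> N" and YY: "cmod (Y * Y) \<le> N"
    unfolding N by (simp_all add: norm_mult power2_eq_square)
  define d1 d2 d3 d4 where "d1 = s * (g + 2) - s' * (g' + 2)" and "d2 = s - s'"
    and "d3 = (g + 2) * g - (g' + 2) * g'" and "d4 = g - g'"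
  have diff: "hmap s g v - hmap s' g' v = (d1 * (X * Y) - d2 * (X * X), d3 * (X * Y) + d4 * (Y * Y))"
    unfolding v hmap_def d1_def d2_def d3_def d4_def by (simp add: algebra_simps)
  have "norm (hmap s g v - hmap s' g' v) \<le> cmod (d1 * (X * Y) - d2 * (X * X)) + cmod (d3 * (X * Y) + d4 * (Y * Y))"
    unfolding diff by (rule norm_Pair_le)
  also have "\<dots> \<le> (cmod d1 * N + cmod d2 * N) + (cmod d3 * N + cmod d4 * N)"
    using XY XX YY
    by (intro add_mono order.trans[OF norm_triangle_ineq4] order.trans[OF norm_triangle_ineq])
       (auto simp: norm_mult intro!: add_mono mult_left_mono)
  also have "\<dots> = hmap_coeff_dist s g s' g' * (norm v)^2"
    unfolding hmap_coeff_dist_def N_def d1_def d2_def d3_def d4_def by (simp add: algebra_simps)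
  finally show ?thesis .
qed

lemma normal_map_sdist_le:
  assumes adm: "admissible s g" and adm0: "admissible s0 g0"
    and \<mu>: "\<mu> > 0" and lower: "\<And>v. \<mu> * (norm v)^2 \<le> norm (hmap s0 g0 v)"
  shows "sdist (normal_map s g z) (normal_map s0 g0 z) \<le> 2 * hmap_coeff_dist s g s0 g0 / \<mu>"
proof -
  define v where "v = hom_coords z"
  have v: "v \<noteq> 0" "norm v > 0" unfolding v_def using hom_coords_nonzero by auto
  note A = hmap_lifts_normal_map[OF adm v(1)] and B = hmap_lifts_normal_map[OF adm0 v(1)]
  have "sdist (normal_map s g z) (normal_map s0 g0 z)
      \<le> 2 * norm (hmap s0 g0 v - hmap s g v) / norm (hmap s0 g0 v)"
    using sdist_to_sphere_le[of "hmap s g v" "hmap s0 g0 v"] A B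
    unfolding v_def to_sphere_hom_coords by simp
  also have "\<dots> \<le> 2 * (hmap_coeff_dist s g s0 g0 * (norm v)^2) / (\<mu> * (norm v)^2)"
  proof (rule frac_le)
    show "2 * norm (hmap s0 g0 v - hmap s g v) \<le> 2 * (hmap_coeff_dist s g s0 g0 * (norm v)^2)"
      using hmap_perturbation[of s g v s0 g0] by (simp add: norm_minus_commute)
  qed (use \<mu> v lower in \<open>auto simp: hmap_coeff_dist_def\<close>)
  also have "\<dots> = 2 * hmap_coeff_dist s g s0 g0 / \<mu>" using v by simp
  finally show ?thesis .
qed

lemma normal_map_close:
  assumes adm: "admissible s0 g0" and e: "e > 0"
  shows "eventually (\<lambda>(s, g). admissible s g
           \<and> (\<forall>z. sdist (normal_map s g z) (normal_map s0 g0 z) \<le> e)) (nhds (s0, g0))"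
proof -
  obtain \<mu> where \<mu>: "\<mu> > 0" and lower: "\<And>v. \<mu> * (norm v)^2 \<le> norm (hmap s0 g0 v)"
    using hmap_lower_bound[OF adm] by blast
  have ident: "((\<lambda>p. p) \<longlongrightarrow> (s0, g0)) (nhds (s0, g0))" by (rule filterlim_ident)
  have lim: "(fst \<longlongrightarrow> s0) (nhds (s0, g0))" "(snd \<longlongrightarrow> g0) (nhds (s0, g0))"
    using tendsto_fst[OF ident] tendsto_snd[OF ident] by simp_all
  have "((\<lambda>p. hmap_coeff_dist (fst p) (snd p) s0 g0) \<longlongrightarrow> hmap_coeff_dist s0 g0 s0 g0) (nhds (s0, g0))"
    unfolding hmap_coeff_dist_def by (intro tendsto_intros lim)
  hence "eventually (\<lambda>p. hmap_coeff_dist (fst p) (snd p) s0 g0 < e * \<mu> / 2) (nhds (s0, g0))"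
    using e \<mu> by (intro order_tendstoD(2)) (auto simp: hmap_coeff_dist_def)
  moreover have "eventually (\<lambda>p. fst p \<noteq> 0) (nhds (s0, g0))"
    and "eventually (\<lambda>p. snd p \<noteq> -2) (nhds (s0, g0))"
    and "eventually (\<lambda>p. snd p \<noteq> -1) (nhds (s0, g0))"
    using adm unfolding admissible_def by (auto intro!: tendsto_imp_eventually_ne lim)
  ultimately show ?thesis
  proof eventually_elim
    case (elim p)
    obtain s g where p: "p = (s, g)" by fastforce
    have adm': "admissible s g" using elim p unfolding admissible_def by simp
    have "2 * hmap_coeff_dist s g s0 g0 / \<mu> \<le> e" using elim p \<mu> by (simp add: field_simps)
    with normal_map_sdist_le[OF adm' adm \<mu> lower] adm' p show ?case by (auto intro: order_trans)
  qed
qed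

text \<open>The orbit relation as a polynomial in the parameter g, for fixed multiplier s.\<close>
definition orbit_polynomial :: "nat \<Rightarrow> nat \<Rightarrow> complex \<Rightarrow> complex poly" where
  "orbit_polynomial m n s = orbit_rel m n [:s:] [:0, 1:]"

lemma poly_horbit:
  "horbit s x k = map_prod (\<lambda>p. poly p x) (\<lambda>p. poly p x) (horbit [:s:] [:0, 1:] k)"
proof (induction k)
  case 0 then show ?case by (simp add: horbit_def hcrit_def)
next
  case (Suc k)
  then show ?case by (cases "horbit [:s:] [:0, 1:] k") (simp add: horbit_Suc hmap_def)
qed

lemma poly_orbit_polynomial: "poly (orbit_polynomial m n s) x = orbit_rel m n s x"
  using poly_horbit[of s x m] poly_horbit[of s x n]
  unfolding orbit_polynomial_def orbit_rel_def det2_def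
  by (cases "horbit [:s:] [:0, 1:] m"; cases "horbit [:s:] [:0, 1:] n") simp

text \<open>One application of the homogeneous lift at most doubles the degree (plus 2), so the
  degrees of the orbit polynomials are bounded independently of s.\<close>
lemma degree_hmap:
  fixes X Y :: "complex poly"
  assumes "degree X \<le> d" "degree Y \<le> d"
  shows "degree (fst (hmap [:s:] [:0, 1:] (X, Y))) \<le> 2 * d + 2"
    and "degree (snd (hmap [:s:] [:0, 1:] (X, Y))) \<le> 2 * d + 2"
proof -
  have A: "degree ([:0, 1:] + 2 :: complex poly) \<le> 1"
    by (simp add: numeral_poly)
  have "degree (([:0, 1:] + 2) * Y - X) \<le> d + 1"
    using A assms degree_mult_le[of "[:0, 1:] + 2" Y] degree_diff_le_max[of "([:0, 1:] + 2) * Y" X]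
    by linarith
  hence "degree ([:s:] * X * (([:0, 1:] + 2) * Y - X)) \<le> 2 * d + 2"
    using assms degree_mult_le[of "[:s:] * X" "([:0, 1:] + 2) * Y - X"] degree_mult_le[of "[:s:]" X]
    by simp
  then show "degree (fst (hmap [:s:] [:0, 1:] (X, Y))) \<le> 2 * d + 2" by (simp add: hmap_def)
  have "degree (Y + [:0, 1:] * X) \<le> d + 1"
    using assms degree_mult_le[of "[:0, 1:]" X] degree_add_le_max[of Y "[:0, 1:] * X"]
      degree_pCons_le[of 0 "[:1:]"] by simp
  hence "degree (([:0, 1:] + 2) * Y * (Y + [:0, 1:] * X)) \<le> 2 * d + 2"
    using A assms degree_mult_le[of "([:0, 1:] + 2) * Y" "Y + [:0, 1:] * X"]
      degree_mult_le[of "[:0, 1:] + 2" Y] by linarith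
  then show "degree (snd (hmap [:s:] [:0, 1:] (X, Y))) \<le> 2 * d + 2" by (simp add: hmap_def)
qed

lemma degree_horbit:
  "degree (fst (horbit [:s :: complex:] [:0, 1:] k)) + 2 \<le> 3 * 2^k
   \<and> degree (snd (horbit [:s:] [:0, 1:] k)) + 2 \<le> 3 * 2^k"
proof (induction k)
  case 0
  then show ?case by (simp add: horbit_def hcrit_def numeral_poly)
next
  case (Suc k)
  obtain X Y where XY: "horbit [:s:] [:0, 1:] k = (X, Y)" by fastforce
  have "degree X \<le> 3 * 2^k - 2" "degree Y \<le> 3 * 2^k - 2" using Suc XY by auto
  from degree_hmap[OF this, of s] Suc XY one_le_power[of "2::nat" k]
  show ?case by (simp add: horbit_Suc) arith
qed

lemma degree_orbit_polynomial: "degree (orbit_polynomial m n s) \<le> 3 * 2^m + 3 * 2^n"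
proof -
  let ?u = "horbit [:s:] [:0, 1:] m" and ?w = "horbit [:s:] [:0, 1:] n"
  have "degree (fst ?u * snd ?w - fst ?w * snd ?u) \<le> 3 * 2^m + 3 * 2^n"
    using degree_horbit[of s m] degree_horbit[of s n]
      degree_diff_le_max[of "fst ?u * snd ?w" "fst ?w * snd ?u"]
      degree_mult_le[of "fst ?u" "snd ?w"] degree_mult_le[of "fst ?w" "snd ?u"]
    by linarith
  then show ?thesis unfolding orbit_polynomial_def orbit_rel_def det2_def .
qed

lemma isCont_horbit: "isCont (\<lambda>s. horbit s g k) (s0 :: complex)"
proof (induction k)
  case 0 then show ?case by (simp add: horbit_def)
next
  case (Suc k)
  then show ?case unfolding horbit_Suc hmap_def by (intro continuous_intros)
qed

lemma isCont_orbit_rel: "isCont (\<lambda>s. orbit_rel m n s g) (s0 :: complex)"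
  unfolding orbit_rel_def det2_def by (intro continuous_intros isCont_horbit)

text \<open>At g = -1 the normal map degenerates to z \<mapsto> s z, and the critical orbit collapses.
  Dividing out the collapsing factor t (1 + t), where g = t - 1, gives a rescaled orbit that
  stays nondegenerate at t = 0 and there records the orbit 1, s, s^2, ... of the linear map.\<close>
fun rescaled_orbit :: "complex \<Rightarrow> nat \<Rightarrow> complex \<Rightarrow> complex \<times> complex" where
  "rescaled_orbit s 0 t = hcrit (t - 1)"
| "rescaled_orbit s (Suc 0) t = (- s * (1 + t), - ((1 - t) ^ 2))"
| "rescaled_orbit s (Suc (Suc k)) t = hmap s (t - 1) (rescaled_orbit s (Suc k) t)"

definition rescale_factor :: "nat \<Rightarrow> complex \<Rightarrow> complex" where
  "rescale_factor k t = (if k = 0 then 1 else (t * (1 + t)) ^ (2 ^ (k - 1)))"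

lemma horbit_rescaled: "horbit s (t - 1) k = cscale (rescale_factor k t) (rescaled_orbit s k t)"
proof (induction s k t rule: rescaled_orbit.induct)
  case (1 s t)
  then show ?case by (simp add: horbit_def rescale_factor_def cscale_def)
next
  case (2 s t)
  then show ?case
    by (simp add: horbit_def rescale_factor_def cscale_def hmap_def hcrit_def
        algebra_simps power2_eq_square)
next
  case (3 s k t)
  have "(t * (1 + t)) ^ 2 ^ k * (t * (1 + t)) ^ 2 ^ k = (t * (1 + t)) ^ 2 ^ Suc k"
    by (simp add: power_add[symmetric] mult_2)
  with 3 show ?case
    by (simp add: horbit_Suc hmap_cscale rescale_factor_def power2_eq_square)
qed

lemma rescaled_orbit_at_zero:
  assumes nonroot: "\<And>i. i \<ge> 1 \<Longrightarrow> s ^ i \<noteq> 1"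
  shows "\<exists>\<kappa>. \<kappa> \<noteq> 0 \<and> rescaled_orbit s k 0 = (\<kappa> * s ^ k, \<kappa>)"
proof (cases k)
  case 0
  then show ?thesis by (auto simp: hcrit_def)
next
  case (Suc j)
  have "\<exists>\<kappa>. \<kappa> \<noteq> 0 \<and> rescaled_orbit s (Suc j) 0 = (\<kappa> * s ^ Suc j, \<kappa>)"
  proof (induction j)
    case 0
    show ?case by (intro exI[of _ "-1"]) simp
  next
    case (Suc j)
    then obtain \<kappa> where \<kappa>: "\<kappa> \<noteq> 0" "rescaled_orbit s (Suc j) 0 = (\<kappa> * s ^ Suc j, \<kappa>)"
      by blast
    have "1 - s ^ Suc j \<noteq> 0" using nonroot[of "Suc j"] by simp
    with \<kappa> show ?case
      by (intro exI[of _ "\<kappa>^2 * (1 - s ^ Suc j)"])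
         (simp add: hmap_def algebra_simps power2_eq_square)
  qed
  with Suc show ?thesis by simp
qed

lemma isCont_rescaled_orbit: "isCont (\<lambda>t. rescaled_orbit s k t) t0"
  by (induction s k "t0" rule: rescaled_orbit.induct)
     (auto simp: hcrit_def hmap_def intro!: continuous_intros)

text \<open>If s is not a root of unity, the orbit relation is not identically zero in g: near
  g = -1 it equals a nonzero factor times det2 of rescaled orbit points, which tends to
  a nonzero multiple of s^m - s^n.\<close>
lemma orbit_rel_not_identically_zero:
  fixes s :: complex
  assumes s: "s \<noteq> 0" and nonroot: "\<And>i. i \<ge> 1 \<Longrightarrow> s ^ i \<noteq> 1" and mn: "m < n"
  shows "\<exists>g. orbit_rel m n s g \<noteq> 0"
proof -
  define F where "F t = det2 (rescaled_orbit s m t) (rescaled_orbit s n t)" for t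
  have "s ^ m \<noteq> s ^ n"
  proof
    assume "s ^ m = s ^ n"
    also have "s ^ n = s ^ m * s ^ (n - m)" using mn by (simp add: power_add[symmetric])
    finally have "s ^ (n - m) = 1" using s by simp
    moreover have "n - m \<ge> 1" using mn by simp
    ultimately show False using nonroot by blast
  qed
  with rescaled_orbit_at_zero[OF nonroot, of m] rescaled_orbit_at_zero[OF nonroot, of n]
  have "F 0 \<noteq> 0" unfolding F_def det2_def by (auto simp: algebra_simps)
  moreover have "isCont F 0"
    unfolding F_def det2_def by (intro continuous_intros isCont_rescaled_orbit)
  ultimately have "eventually (\<lambda>t. F t \<noteq> 0) (at 0)"
    by (intro tendsto_imp_eventually_ne) (auto simp: isCont_def)
  moreover have "eventually (\<lambda>t. 1 + t \<noteq> 0) (at (0::complex))"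
  proof (rule tendsto_imp_eventually_ne)
    show "((\<lambda>t. 1 + t) \<longlongrightarrow> 1 + 0) (at (0::complex))" by (intro tendsto_intros)
  qed simp
  moreover have "eventually (\<lambda>t. t \<noteq> 0) (at (0::complex))" by (rule eventually_neq_at_within)
  ultimately have "eventually (\<lambda>t. F t \<noteq> 0 \<and> 1 + t \<noteq> 0 \<and> t \<noteq> 0) (at 0)"
    by eventually_elim blast
  then obtain t where t: "F t \<noteq> 0" "1 + t \<noteq> 0" "t \<noteq> 0"
    using eventually_happens'[OF at_neq_bot] by blast
  have "orbit_rel m n s (t - 1) = rescale_factor m t * rescale_factor n t * F t"
    unfolding orbit_rel_def horbit_rescaled det2_cscale F_def ..
  also have "\<dots> \<noteq> 0" using t by (simp add: rescale_factor_def)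
  finally show ?thesis by blast
qed

lemma solution_perturbation:
  assumes adm: "admissible s0 g0" and rel: "orbit_rel m n s0 g0 = 0"
    and nonzero: "orbit_polynomial m n s0 \<noteq> 0" and e: "e > 0"
  shows "eventually (\<lambda>s. \<exists>g. admissible s g \<and> orbit_rel m n s g = 0
           \<and> (\<forall>z. sdist (normal_map s g z) (normal_map s0 g0 z) \<le> e)) (nhds s0)"
proof -
  obtain Ps Pg where Ps: "eventually Ps (nhds s0)" and Pg: "eventually Pg (nhds g0)"
    and close: "\<And>s g. Ps s \<Longrightarrow> Pg g \<Longrightarrow>
       admissible s g \<and> (\<forall>z. sdist (normal_map s g z) (normal_map s0 g0 z) \<le> e)"
    using normal_map_close[OF adm e] unfolding nhds_prod eventually_prod_filter by auto
  obtain r where r: "r > 0" and ball: "\<And>g. dist g g0 < r \<Longrightarrow> Pg g"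
    using Pg unfolding eventually_nhds_metric by blast
  have "eventually (\<lambda>s. \<exists>g. cmod (g - g0) < r \<and> poly (orbit_polynomial m n s) g = 0) (nhds s0)"
    by (rule roots_persist[where F = "orbit_polynomial m n" and D = "3 * 2^m + 3 * 2^n"])
       (simp_all add: poly_orbit_polynomial isCont_orbit_rel rel degree_orbit_polynomial nonzero r)
  with Ps show ?thesis
  proof eventually_elim
    case (elim s)
    then obtain g where "cmod (g - g0) < r" "orbit_rel m n s g = 0"
      by (auto simp: poly_orbit_polynomial)
    with elim(1) close ball show ?case by (auto simp: dist_norm)
  qed
qed

text \<open>The perturbation statement for all of Z^{s0}_{m,n} at once: it has only finitely many
  elements, namely the admissible roots of a nonzero polynomial.\<close>
lemma Z_perturbation:
  assumes s0: "s0 \<noteq> 0" and nonroot: "\<And>i. i \<ge> 1 \<Longrightarrow> s0 ^ i \<noteq> 1" and mn: "m < n"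
    and e: "e > 0"
  shows "eventually (\<lambda>s. \<forall>f \<in> Z s0 m n. \<exists>f' \<in> Z s m n. \<forall>z. sdist (f' z) (f z) \<le> e) (nhds s0)"
proof -
  obtain g where "orbit_rel m n s0 g \<noteq> 0"
    using orbit_rel_not_identically_zero[of s0 m n] s0 nonroot mn by blast
  hence nonzero: "orbit_polynomial m n s0 \<noteq> 0" by (metis poly_0 poly_orbit_polynomial)
  define R where "R = {g. admissible s0 g \<and> orbit_rel m n s0 g = 0}"
  have "finite R"
    using poly_roots_finite[OF nonzero] unfolding R_def poly_orbit_polynomial
    by (rule finite_subset[rotated]) auto
  hence "eventually (\<lambda>s. \<forall>g0\<in>R. \<exists>g. admissible s g \<and> orbit_rel m n s g = 0
      \<and> (\<forall>z. sdist (normal_map s g z) (normal_map s0 g0 z) \<le> e)) (nhds s0)"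
    using solution_perturbation[OF _ _ nonzero e] unfolding R_def
    by (intro eventually_ball_finite) auto
  then show ?thesis
  proof eventually_elim
    case (elim s)
    show ?case
    proof
      fix f assume "f \<in> Z s0 m n"
      then obtain g0 where "g0 \<in> R" and f: "f = normal_map s0 g0"
        using Z_normal_form[OF s0] unfolding R_def by blast
      with elim normal_map_in_Z show "\<exists>f' \<in> Z s m n. \<forall>z. sdist (f' z) (f z) \<le> e" by blast
    qed
  qed
qed

lemma unit_circle_approached_from_inside:
  assumes l: "cmod l = 1" and P: "eventually P (nhds l)"
  shows "\<exists>s. 0 < cmod s \<and> cmod s < 1 \<and> P s"
proof -
  have "((\<lambda>r. of_real r * l) \<longlongrightarrow> of_real 1 * l) (at_left (1::real))"
    by (intro tendsto_intros)
  hence "eventually (\<lambda>r. P (of_real r * l)) (at_left (1::real))"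
    using P by (simp add: filterlim_iff)
  moreover have "eventually (\<lambda>r. r \<in> {0<..<1}) (at_left (1::real))"
    by (rule eventually_at_left_real) simp
  ultimately have "eventually (\<lambda>r. P (of_real r * l) \<and> r \<in> {0<..<1}) (at_left (1::real))"
    by eventually_elim blast
  then obtain r where "P (of_real r * l)" "0 < r" "r < 1"
    using eventually_happens'[of "at_left (1::real)"] trivial_limit_at_left_real
    unfolding trivial_limit_def by auto
  with l show ?thesis by (intro exI[of _ "of_real r * l"]) (simp add: norm_mult)
qed

lemma exp_irrational_not_root_of_unity:
  fixes \<theta> :: real
  assumes "\<theta> \<notin> \<rat>" and "i \<ge> (1::nat)"
  shows "exp (2 * of_real pi * \<i> * of_real \<theta>) ^ i \<noteq> 1"
proof
  assume "exp (2 * of_real pi * \<i> * of_real \<theta>) ^ i = 1"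
  hence "exp (of_nat i * (2 * of_real pi * \<i> * of_real \<theta>)) = 1" by (simp add: exp_of_nat_mult)
  then obtain k :: int where "Im (of_nat i * (2 * of_real pi * \<i> * of_real \<theta>)) = of_int (2 * k) * pi"
    unfolding exp_eq_1 by blast
  hence "real i * \<theta> = of_int k" by (simp add: field_simps)
  hence "\<theta> = of_int k / real i" using assms(2) by (simp add: field_simps)
  with assms(1) show False by simp
qed

theorem mainTheorem12:
  fixes \<theta> :: real and m n :: nat and \<epsilon> :: real
  assumes "0 < \<theta>" and "\<theta> < 1" and "\<theta> \<notin> \<rat>" and "m < n" and "\<epsilon> > 0"
  shows "\<exists>s::complex. 0 < cmod s \<and> cmod s < 1 \<and>
           (\<forall>g \<in> Z (exp (2 * of_real pi * \<i> * of_real \<theta>)) m n.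
              \<exists>g' \<in> Z s m n. (SUP z. sdist (g' z) (g z)) < \<epsilon>)"
proof -
  define l where "l = exp (2 * of_real pi * \<i> * of_real \<theta>)"
  have "eventually (\<lambda>s. \<forall>f \<in> Z l m n. \<exists>f' \<in> Z s m n. \<forall>z. sdist (f' z) (f z) \<le> \<epsilon> / 2) (nhds l)"
    using Z_perturbation[of l m n "\<epsilon> / 2"] exp_irrational_not_root_of_unity[OF assms(3)] assms(4,5)
    unfolding l_def by simp
  moreover have "cmod l = 1" unfolding l_def by simp
  ultimately obtain s where s: "0 < cmod s" "cmod s < 1"
    and approx: "\<And>f. f \<in> Z l m n \<Longrightarrow> \<exists>f' \<in> Z s m n. \<forall>z. sdist (f' z) (f z) \<le> \<epsilon> / 2"
    using unit_circle_approached_from_inside by blast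
  have "\<exists>f' \<in> Z s m n. (SUP z. sdist (f' z) (f z)) < \<epsilon>" if f: "f \<in> Z l m n" for f
  proof -
    obtain f' where "f' \<in> Z s m n" and "\<forall>z. sdist (f' z) (f z) \<le> \<epsilon> / 2"
      using approx[OF f] by blast
    moreover from this(2) have "(SUP z. sdist (f' z) (f z)) \<le> \<epsilon> / 2" by (intro cSUP_least) auto
    ultimately show ?thesis using assms(5) by force
  qed
  with s show ?thesis unfolding l_def by blast
qed

end
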